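(* Let $\nu=\sum_{i=1}^kw_i\delta_{\mu_i}$ and $\hat\nu=\sum_{i=1}^k\hat w_i\delta_{\hat\mu_i}$ be probability distributions on $\mathbb{R}$, and suppose $W_1(\nu,\hat\nu)<\epsilon$. Let \[\epsilon_1=\min\{|\mu_i-\mu_j|,|\hat\mu_i-\hat\mu_j|:1\le i<j\le k\},\qquad \epsilon_2=\min\{w_i,\hat w_i:i\in[k]\}.\] If $\epsilon<\epsilon_1\epsilon_2/4$, then there exists a permutation $\Pi$ such that \[\|\mu-\Pi\hat\mu\|_\infty<\epsilon/\epsilon_2,\qquad \|w-\Pi\hat w\|_\infty<2\epsilon/\epsilon_1,\] where $\mu=(\mu_1,\dots,\mu_k)$, $w=(w_1,\dots,w_k)$, and $\hat\mu,\hat w$ are defined analogously.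
   Context: $W_1$ is the 1-Wasserstein distance: $W_1(\nu,\nu')=\inf\mathbb{E}|X-Y|$ over couplings with $X\sim\nu$, $Y\sim\nu'$. *)

theory Defs
  imports "HOL-Probability.Probability"
begin

definition mix_dirac :: "nat \<Rightarrow> (nat \<Rightarrow> real) \<Rightarrow> (nat \<Rightarrow> real) \<Rightarrow> real measure" where
  "mix_dirac k w \<mu> =
     measure_of UNIV (sets borel) (\<lambda>A. \<Sum>i<k. ennreal (w i) * indicator A (\<mu> i))"

definition coupling :: "real measure \<Rightarrow> real measure \<Rightarrow> (real \<times> real) measure \<Rightarrow> bool" where
  "coupling \<nu> \<nu>' \<pi> \<longleftrightarrow>
     prob_space \<pi> \<and> sets \<pi> = sets (borel \<Otimes>\<^sub>M borel) \<and>
     distr \<pi> borel fst = \<nu> \<and> distr \<pi> borel snd = \<nu>'"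

definition W1 :: "real measure \<Rightarrow> real measure \<Rightarrow> ennreal" where
  "W1 \<nu> \<nu>' = (INF \<pi> \<in> {\<pi>. coupling \<nu> \<nu>' \<pi>}. \<integral>\<^sup>+ z. ennreal \<bar>fst z - snd z\<bar> \<partial>\<pi>)"

end

theory Submission
  imports Defs "HOL-Combinatorics.Permutations"
begin

(* Fix a coupling pi of nu and nu-hat whose transport cost E|X - Y| is below eps.  Every atom mu_i
   carries mass at least eps_2, so if no atom of nu-hat lay within eps/eps_2 of it, moving that mass
   alone would cost eps; hence each mu_i has a partner mu-hat_sigma(i) that close.  Since
   eps/eps_2 < eps_1/4, distinct atoms get distinct partners, and sigma is a permutation.  For a
   matched pair, |w_i - w-hat_sigma(i)| is at most the mass pi moves from mu_i to other atoms plus the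
   mass it moves into mu-hat_sigma(i) from other atoms, and every such move has length at least
   eps_1/2. *)

lemma less_ennreal_imp_pos: "(x :: ennreal) < ennreal e \<Longrightarrow> 0 < e"
  by (metis ennreal_less_zero_iff le_less_trans zero_le)

lemma measure_mult_le_nn_integral:
  assumes "finite_measure M" "X \<in> sets M" "c \<ge> 0" "AE x in M. x \<in> X \<longrightarrow> ennreal c \<le> f x"
  shows "ennreal (c * measure M X) \<le> (\<integral>\<^sup>+ x. f x \<partial>M)"
proof -
  have "ennreal (c * measure M X) = (\<integral>\<^sup>+ x. ennreal c * indicator X x \<partial>M)"
    using assms by (simp add: nn_integral_cmult_indicator finite_measure.emeasure_eq_measure ennreal_mult)
  also have "\<dots> \<le> (\<integral>\<^sup>+ x. f x \<partial>M)"
    using assms(4) by (intro nn_integral_mono_AE) (auto elim!: eventually_mono split: split_indicator)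
  finally show ?thesis .
qed

lemma permutes_matching_exists:
  assumes "finite A" "\<And>i. i \<in> A \<Longrightarrow> \<exists>j\<in>A. R i j"
    and "\<And>i i' j. i \<in> A \<Longrightarrow> i' \<in> A \<Longrightarrow> R i j \<Longrightarrow> R i' j \<Longrightarrow> i = i'"
  shows "\<exists>\<sigma>. \<sigma> permutes A \<and> (\<forall>i\<in>A. R i (\<sigma> i))"
proof -
  define \<sigma> where "\<sigma> i = (if i \<in> A then SOME j. j \<in> A \<and> R i j else i)" for i
  have \<sigma>: "\<sigma> i \<in> A" "R i (\<sigma> i)" if "i \<in> A" for i
    using someI_ex[OF assms(2)[OF that, unfolded Bex_def]] that unfolding \<sigma>_def by auto
  have "inj_on \<sigma> A"
    using \<sigma> assms(3) by (metis inj_onI)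
  then have "bij_betw \<sigma> A A"
    using endo_inj_surj[OF assms(1)] \<sigma>(1) by (auto simp: bij_betw_def)
  then have "\<sigma> permutes A"
    by (rule bij_imp_permutes) (simp add: \<sigma>_def)
  then show ?thesis
    using \<sigma>(2) by blast
qed

lemma inj_on_if_separated:
  fixes f :: "'a \<Rightarrow> real"
  assumes "0 < \<delta>" "\<And>i j. i \<in> A \<Longrightarrow> j \<in> A \<Longrightarrow> i \<noteq> j \<Longrightarrow> \<delta> \<le> \<bar>f i - f j\<bar>"
  shows "inj_on f A"
proof (rule inj_onI, rule ccontr)
  fix i j assume "i \<in> A" "j \<in> A" "f i = f j" "i \<noteq> j"
  then show False using assms by force
qed

lemma sets_mix_dirac [simp]: "sets (mix_dirac k w \<mu>) = sets borel"
proof -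
  have "sigma_sets UNIV (sets borel) = (sets borel :: real set set)"
    using sets.sigma_sets_eq[of borel] by simp
  then show ?thesis unfolding mix_dirac_def by (subst sets_measure_of) auto
qed

lemma emeasure_mix_dirac:
  assumes "A \<in> sets borel"
  shows "emeasure (mix_dirac k w \<mu>) A = (\<Sum>i<k. ennreal (w i) * indicator A (\<mu> i))"
  unfolding mix_dirac_def
proof (rule emeasure_measure_of_sigma[OF _ _ _ assms])
  show "sigma_algebra UNIV (sets borel)"
    by (metis sets.sigma_algebra_axioms space_borel)
  show "positive (sets borel) (\<lambda>A. \<Sum>i<k. ennreal (w i) * indicator A (\<mu> i))"
    by (simp add: positive_def)
  show "countably_additive (sets borel) (\<lambda>A. \<Sum>i<k. ennreal (w i) * indicator A (\<mu> i))"
    unfolding countably_additive_def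
  proof (intro allI impI)
    fix F :: "nat \<Rightarrow> real set"
    assume "disjoint_family F"
    have "(\<Sum>n. \<Sum>i<k. ennreal (w i) * indicator (F n) (\<mu> i)) =
        (\<Sum>i<k. \<Sum>n. ennreal (w i) * indicator (F n) (\<mu> i))"
      by (intro suminf_sum summableI)
    also have "\<dots> = (\<Sum>i<k. ennreal (w i) * indicator (\<Union>n. F n) (\<mu> i))"
      using \<open>disjoint_family F\<close> by (simp add: suminf_indicator)
    finally show "(\<Sum>n. \<Sum>i<k. ennreal (w i) * indicator (F n) (\<mu> i)) =
        (\<Sum>i<k. ennreal (w i) * indicator (\<Union>n. F n) (\<mu> i))" .
  qed
qed

lemma measure_mix_dirac_singleton:
  assumes "inj_on \<mu> {..<k}" "i < k" "w i \<ge> 0"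
  shows "measure (mix_dirac k w \<mu>) {\<mu> i} = w i"
proof -
  have "emeasure (mix_dirac k w \<mu>) {\<mu> i} = (\<Sum>j<k. ennreal (w j) * indicator {\<mu> i} (\<mu> j))"
    by (simp add: emeasure_mix_dirac)
  also have "\<dots> = (\<Sum>j\<in>{i}. ennreal (w j) * indicator {\<mu> i} (\<mu> j))"
    using assms by (intro sum.mono_neutral_right) (auto simp: inj_on_def split: split_indicator)
  finally show ?thesis
    using assms(3) by (simp add: measure_def)
qed

lemma AE_mix_dirac: "AE x in mix_dirac k w \<mu>. x \<in> \<mu> ` {..<k}"
proof (rule AE_I')
  have "- (\<mu> ` {..<k}) \<in> sets borel"
    by (intro borel_open open_Compl finite_imp_closed) auto
  then show "- (\<mu> ` {..<k}) \<in> null_sets (mix_dirac k w \<mu>)"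
    by (simp add: null_sets_def emeasure_mix_dirac)
qed auto

lemma sets_coupling:
  "coupling \<nu> \<nu>' \<pi> \<Longrightarrow> sets \<pi> = sets (borel \<Otimes>\<^sub>M borel)"
  unfolding coupling_def by simp

lemma space_coupling: "coupling \<nu> \<nu>' \<pi> \<Longrightarrow> space \<pi> = UNIV"
  using sets_eq_imp_space_eq[OF sets_coupling] by (simp add: space_pair_measure)

lemma coupling_prob_space: "coupling \<nu> \<nu>' \<pi> \<Longrightarrow> prob_space \<pi>"
  unfolding coupling_def by simp

lemma measurable_fst_coupling: "coupling \<nu> \<nu>' \<pi> \<Longrightarrow> fst \<in> measurable \<pi> borel"
  by (simp add: measurable_cong_sets[OF sets_coupling refl])

lemma measurable_snd_coupling: "coupling \<nu> \<nu>' \<pi> \<Longrightarrow> snd \<in> measurable \<pi> borel"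
  by (simp add: measurable_cong_sets[OF sets_coupling refl])

lemma coupling_measure_fst:
  assumes "coupling \<nu> \<nu>' \<pi>" "A \<in> sets borel"
  shows "measure \<nu> A = measure \<pi> (A \<times> UNIV)"
proof -
  have "\<nu> = distr \<pi> borel fst" using assms(1) unfolding coupling_def by simp
  then show ?thesis
    using assms by (simp add: measure_distr measurable_fst_coupling space_coupling vimage_fst)
qed

lemma coupling_measure_snd:
  assumes "coupling \<nu> \<nu>' \<pi>" "A \<in> sets borel"
  shows "measure \<nu>' A = measure \<pi> (UNIV \<times> A)"
proof -
  have "\<nu>' = distr \<pi> borel snd" using assms(1) unfolding coupling_def by simp
  then show ?thesis
    using assms by (simp add: measure_distr measurable_snd_coupling space_coupling vimage_snd)
qed

lemma coupling_AE_fst: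
  assumes "coupling \<nu> \<nu>' \<pi>" "AE x in \<nu>. P x"
  shows "AE z in \<pi>. P (fst z)"
  using assms AE_distrD[OF measurable_fst_coupling] unfolding coupling_def by blast

lemma coupling_AE_snd:
  assumes "coupling \<nu> \<nu>' \<pi>" "AE y in \<nu>'. P y"
  shows "AE z in \<pi>. P (snd z)"
  using assms AE_distrD[OF measurable_snd_coupling] unfolding coupling_def by blast

definition coupling_cost :: "(real \<times> real) measure \<Rightarrow> ennreal" where
  "coupling_cost \<pi> = (\<integral>\<^sup>+ z. ennreal \<bar>fst z - snd z\<bar> \<partial>\<pi>)"

lemma W1_less_imp_coupling:
  assumes "W1 \<nu> \<nu>' < e"
  obtains \<pi> where "coupling \<nu> \<nu>' \<pi>" "coupling_cost \<pi> < e"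
  using assms unfolding W1_def coupling_cost_def INF_less_iff by blast

lemma coupling_cost_ge_measure:
  assumes "coupling \<nu> \<nu>' \<pi>" "X \<in> sets (borel \<Otimes>\<^sub>M borel)" "c \<ge> 0"
    and "AE z in \<pi>. z \<in> X \<longrightarrow> c \<le> \<bar>fst z - snd z\<bar>"
  shows "ennreal (c * measure \<pi> X) \<le> coupling_cost \<pi>"
  unfolding coupling_cost_def
proof (rule measure_mult_le_nn_integral)
  show "finite_measure \<pi>"
    using coupling_prob_space[OF assms(1)] by (simp add: prob_space_def)
  show "X \<in> sets \<pi>"
    using assms(1,2) by (simp add: sets_coupling)
qed (use assms(3,4) in \<open>auto elim!: eventually_mono\<close>)

lemma coupling_cost_ge_distant_mass:
  assumes "coupling \<nu> \<nu>' \<pi>" "AE y in \<nu>'. y \<in> T" "A \<in> sets borel" "d \<ge> 0"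
    and "\<And>x y. x \<in> A \<Longrightarrow> y \<in> T \<Longrightarrow> d \<le> \<bar>x - y\<bar>"
  shows "ennreal (d * measure \<nu> A) \<le> coupling_cost \<pi>"
proof -
  have "AE z in \<pi>. z \<in> A \<times> UNIV \<longrightarrow> d \<le> \<bar>fst z - snd z\<bar>"
    using coupling_AE_snd[OF assms(1,2)] by eventually_elim (auto intro: assms(5))
  then show ?thesis
    using coupling_cost_ge_measure[OF assms(1) _ assms(4)] assms(3)
    by (simp add: coupling_measure_fst[OF assms(1,3)])
qed

lemma coupling_point_mass_diff_le:
  assumes "coupling \<nu> \<nu>' \<pi>"
  shows "\<bar>measure \<nu> {x\<^sub>0} - measure \<nu>' {y\<^sub>0}\<bar> \<le> measure \<pi> ({x\<^sub>0} \<times> (- {y\<^sub>0}) \<union> (- {x\<^sub>0}) \<times> {y\<^sub>0})"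
proof -
  interpret prob_space \<pi> using coupling_prob_space[OF assms] .
  have sets: "A \<times> B \<in> sets \<pi>" if "A \<in> sets borel" "B \<in> sets borel" for A B :: "real set"
    using that by (simp add: sets_coupling[OF assms])
  have closed_sets: "{x\<^sub>0} \<in> sets borel" "- {x\<^sub>0} \<in> sets borel" "{y\<^sub>0} \<in> sets borel" "- {y\<^sub>0} \<in> sets borel"
    by auto
  have "measure \<nu> {x\<^sub>0} = measure \<pi> ({x\<^sub>0} \<times> UNIV)"
    by (rule coupling_measure_fst[OF assms]) simp
  also have "{x\<^sub>0} \<times> UNIV = {x\<^sub>0} \<times> {y\<^sub>0} \<union> {x\<^sub>0} \<times> (- {y\<^sub>0})"
    by auto
  also have "measure \<pi> \<dots> = measure \<pi> ({x\<^sub>0} \<times> {y\<^sub>0}) + measure \<pi> ({x\<^sub>0} \<times> (- {y\<^sub>0}))"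
    by (intro finite_measure_Union sets closed_sets) auto
  finally have fst_split: "measure \<nu> {x\<^sub>0} = \<dots>" .
  have "measure \<nu>' {y\<^sub>0} = measure \<pi> (UNIV \<times> {y\<^sub>0})"
    by (rule coupling_measure_snd[OF assms]) simp
  also have "UNIV \<times> {y\<^sub>0} = {x\<^sub>0} \<times> {y\<^sub>0} \<union> (- {x\<^sub>0}) \<times> {y\<^sub>0}"
    by auto
  also have "measure \<pi> \<dots> = measure \<pi> ({x\<^sub>0} \<times> {y\<^sub>0}) + measure \<pi> ((- {x\<^sub>0}) \<times> {y\<^sub>0})"
    by (intro finite_measure_Union sets closed_sets) auto
  finally have snd_split: "measure \<nu>' {y\<^sub>0} = \<dots>" .
  have "measure \<pi> ({x\<^sub>0} \<times> (- {y\<^sub>0}) \<union> (- {x\<^sub>0}) \<times> {y\<^sub>0}) =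
      measure \<pi> ({x\<^sub>0} \<times> (- {y\<^sub>0})) + measure \<pi> ((- {x\<^sub>0}) \<times> {y\<^sub>0})"
    by (intro finite_measure_Union sets closed_sets) auto
  then show ?thesis
    using fst_split snd_split measure_nonneg[of \<pi>] by (simp add: abs_le_iff)
qed

lemma coupling_cost_ge_point_mass_diff:
  assumes "coupling \<nu> \<nu>' \<pi>" "AE x in \<nu>. x \<in> S" "AE y in \<nu>'. y \<in> T" "c \<ge> 0"
    and "\<And>x. x \<in> S \<Longrightarrow> x \<noteq> x\<^sub>0 \<Longrightarrow> c \<le> \<bar>x - y\<^sub>0\<bar>"
    and "\<And>y. y \<in> T \<Longrightarrow> y \<noteq> y\<^sub>0 \<Longrightarrow> c \<le> \<bar>x\<^sub>0 - y\<bar>"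
  shows "ennreal (c * \<bar>measure \<nu> {x\<^sub>0} - measure \<nu>' {y\<^sub>0}\<bar>) \<le> coupling_cost \<pi>"
proof -
  let ?X = "{x\<^sub>0} \<times> (- {y\<^sub>0}) \<union> (- {x\<^sub>0}) \<times> {y\<^sub>0}"
  have "AE z in \<pi>. z \<in> ?X \<longrightarrow> c \<le> \<bar>fst z - snd z\<bar>"
    using coupling_AE_fst[OF assms(1,2)] coupling_AE_snd[OF assms(1,3)]
    by eventually_elim (auto intro: assms(5,6))
  then have "ennreal (c * measure \<pi> ?X) \<le> coupling_cost \<pi>"
    using assms(1,4) by (intro coupling_cost_ge_measure) auto
  moreover have "c * \<bar>measure \<nu> {x\<^sub>0} - measure \<nu>' {y\<^sub>0}\<bar> \<le> c * measure \<pi> ?X"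
    using coupling_point_mass_diff_le[OF assms(1)] assms(4) by (rule mult_left_mono)
  ultimately show ?thesis
    using ennreal_leI order_trans by blast
qed

lemma mix_dirac_atom_near:
  assumes "coupling (mix_dirac k w \<mu>) (mix_dirac k wh \<mu>h) \<pi>" "coupling_cost \<pi> < ennreal \<epsilon>"
    and "inj_on \<mu> {..<k}" "i < k" "0 < m" "m \<le> w i"
  shows "\<exists>j<k. \<bar>\<mu> i - \<mu>h j\<bar> < \<epsilon> / m"
proof (rule ccontr)
  assume "\<not> ?thesis"
  then have far: "\<epsilon> / m \<le> \<bar>x - y\<bar>" if "x \<in> {\<mu> i}" "y \<in> \<mu>h ` {..<k}" for x y
    using that by auto
  have "\<epsilon> > 0"
    using assms(2) by (rule less_ennreal_imp_pos)
  then have "ennreal (\<epsilon> / m * measure (mix_dirac k w \<mu>) {\<mu> i}) \<le> coupling_cost \<pi>"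
    using assms(5) by (intro coupling_cost_ge_distant_mass[OF assms(1) AE_mix_dirac _ _ far]) auto
  moreover have "\<epsilon> \<le> \<epsilon> / m * measure (mix_dirac k w \<mu>) {\<mu> i}"
    using assms(3-6) \<open>\<epsilon> > 0\<close> by (simp add: measure_mix_dirac_singleton field_simps)
  ultimately have "ennreal \<epsilon> \<le> coupling_cost \<pi>"
    using ennreal_leI order_trans by blast
  then show False
    using assms(2) by simp
qed

lemma mix_dirac_weight_close:
  assumes "coupling (mix_dirac k w \<mu>) (mix_dirac k wh \<mu>h) \<pi>" "coupling_cost \<pi> < ennreal \<epsilon>"
    and "inj_on \<mu> {..<k}" "inj_on \<mu>h {..<k}" "i < k" "j < k" "w i \<ge> 0" "wh j \<ge> 0" "c > 0"
    and "\<And>i'. i' < k \<Longrightarrow> i' \<noteq> i \<Longrightarrow> c \<le> \<bar>\<mu> i' - \<mu>h j\<bar>"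
    and "\<And>j'. j' < k \<Longrightarrow> j' \<noteq> j \<Longrightarrow> c \<le> \<bar>\<mu> i - \<mu>h j'\<bar>"
  shows "\<bar>w i - wh j\<bar> < \<epsilon> / c"
proof -
  have "ennreal (c * \<bar>measure (mix_dirac k w \<mu>) {\<mu> i} - measure (mix_dirac k wh \<mu>h) {\<mu>h j}\<bar>)
      \<le> coupling_cost \<pi>"
    using assms(9-11)
    by (intro coupling_cost_ge_point_mass_diff[OF assms(1) AE_mix_dirac AE_mix_dirac]) auto
  then have "ennreal (c * \<bar>w i - wh j\<bar>) < ennreal \<epsilon>"
    using assms(2-8) by (simp add: measure_mix_dirac_singleton)
  then show ?thesis
    using assms(9) by (simp add: ennreal_less_iff field_simps)
qed

lemma mix_dirac_matching:
  fixes w \<mu> wh \<mu>h :: "nat \<Rightarrow> real"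
  assumes "W1 (mix_dirac k w \<mu>) (mix_dirac k wh \<mu>h) < ennreal \<epsilon>"
    and sep: "\<And>i j. i < k \<Longrightarrow> j < k \<Longrightarrow> i \<noteq> j \<Longrightarrow> \<delta> \<le> \<bar>\<mu> i - \<mu> j\<bar>"
    and sep_h: "\<And>i j. i < k \<Longrightarrow> j < k \<Longrightarrow> i \<noteq> j \<Longrightarrow> \<delta> \<le> \<bar>\<mu>h i - \<mu>h j\<bar>"
    and weight: "\<And>i. i < k \<Longrightarrow> m \<le> w i" and weight_h: "\<And>i. i < k \<Longrightarrow> m \<le> wh i"
    and "0 < m" "\<epsilon> < \<delta> * m / 4"
  shows "\<exists>\<sigma>. \<sigma> permutes {..<k} \<and>
           (\<forall>i<k. \<bar>\<mu> i - \<mu>h (\<sigma> i)\<bar> < \<epsilon> / m) \<and>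
           (\<forall>i<k. \<bar>w i - wh (\<sigma> i)\<bar> < 2 * \<epsilon> / \<delta>)"
proof -
  obtain \<pi> where \<pi>: "coupling (mix_dirac k w \<mu>) (mix_dirac k wh \<mu>h) \<pi>" "coupling_cost \<pi> < ennreal \<epsilon>"
    using assms(1) by (rule W1_less_imp_coupling)
  have "\<epsilon> > 0"
    using \<pi>(2) by (rule less_ennreal_imp_pos)
  then have "0 < \<delta> * m"
    using assms(7) by linarith
  then have "\<delta> > 0"
    using assms(6) by (simp add: zero_less_mult_iff)
  define d where "d = \<epsilon> / m"
  have d: "d < \<delta> / 4"
    unfolding d_def using assms(6,7) by (simp add: field_simps)
  have inj_\<mu>: "inj_on \<mu> {..<k}" and inj_\<mu>h: "inj_on \<mu>h {..<k}"
    using sep sep_h \<open>\<delta> > 0\<close> by (auto intro: inj_on_if_separated)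
  have near: "\<exists>j\<in>{..<k}. \<bar>\<mu> i - \<mu>h j\<bar> < d" if "i \<in> {..<k}" for i
    using mix_dirac_atom_near[OF \<pi> inj_\<mu> _ assms(6) weight] that unfolding d_def by auto
  have "\<exists>\<sigma>. \<sigma> permutes {..<k} \<and> (\<forall>i\<in>{..<k}. \<bar>\<mu> i - \<mu>h (\<sigma> i)\<bar> < d)"
  proof (rule permutes_matching_exists[OF _ near])
    show "i = i'" if "i \<in> {..<k}" "i' \<in> {..<k}" "\<bar>\<mu> i - \<mu>h j\<bar> < d" "\<bar>\<mu> i' - \<mu>h j\<bar> < d"
      for i i' j
    proof (rule ccontr)
      assume "i \<noteq> i'"
      then have "\<delta> \<le> \<bar>\<mu> i - \<mu> i'\<bar>" using sep that(1,2) by simp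
      then show False using that(3,4) d by arith
    qed
  qed simp
  then obtain \<sigma> where \<sigma>: "\<sigma> permutes {..<k}" "\<And>i. i < k \<Longrightarrow> \<bar>\<mu> i - \<mu>h (\<sigma> i)\<bar> < d"
    by blast
  have \<sigma>_lt: "\<sigma> i < k" if "i < k" for i
    using permutes_in_image[OF \<sigma>(1)] that by simp
  have "\<bar>w i - wh (\<sigma> i)\<bar> < \<epsilon> / (\<delta> / 2)" if i: "i < k" for i
  proof (rule mix_dirac_weight_close[OF \<pi> inj_\<mu> inj_\<mu>h i \<sigma>_lt[OF i]])
    show "\<delta> / 2 \<le> \<bar>\<mu> i' - \<mu>h (\<sigma> i)\<bar>" if "i' < k" "i' \<noteq> i" for i'
      using sep[of i' i] \<sigma>(2)[OF i] i that d by linarith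
    show "\<delta> / 2 \<le> \<bar>\<mu> i - \<mu>h j'\<bar>" if "j' < k" "j' \<noteq> \<sigma> i" for j'
      using sep_h[of j' "\<sigma> i"] \<sigma>(2)[OF i] \<sigma>_lt[OF i] that d by linarith
    show "0 \<le> w i" "0 \<le> wh (\<sigma> i)"
      using weight[OF i] weight_h[OF \<sigma>_lt[OF i]] assms(6) by linarith+
  qed (use \<open>\<delta> > 0\<close> in simp)
  then show ?thesis
    using \<sigma> unfolding d_def by (auto simp: mult.commute)
qed

lemma finite_pair_dists: "finite {\<bar>f i - f j\<bar> | i j. i < j \<and> j < k}"
  for f :: "nat \<Rightarrow> real"
proof -
  have "{\<bar>f i - f j\<bar> | i j. i < j \<and> j < k} \<subseteq> (\<lambda>(i, j). \<bar>f i - f j\<bar>) ` ({..<k} \<times> {..<k})"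
    by force
  then show ?thesis
    by (rule finite_subset) auto
qed

lemma pair_dist_in_pair_dists:
  fixes f :: "nat \<Rightarrow> real"
  assumes "i < k" "j < k" "i \<noteq> j"
  shows "\<bar>f i - f j\<bar> \<in> {\<bar>f i' - f j'\<bar> | i' j'. i' < j' \<and> j' < k}"
proof (cases "i < j")
  case True
  then show ?thesis using assms by blast
next
  case False
  then have "j < i" using assms(3) by simp
  then show ?thesis using assms by (force simp: abs_minus_commute)
qed

theorem lemma1:
  fixes k :: nat and w \<mu> wh \<mu>h :: "nat \<Rightarrow> real" and \<epsilon> \<epsilon>\<^sub>1 \<epsilon>\<^sub>2 :: real
  assumes "k \<ge> 2"
    and "\<forall>i<k. w i \<ge> 0" and "(\<Sum>i<k. w i) = 1"
    and "\<forall>i<k. wh i \<ge> 0" and "(\<Sum>i<k. wh i) = 1"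
    and "W1 (mix_dirac k w \<mu>) (mix_dirac k wh \<mu>h) < ennreal \<epsilon>"
    and "\<epsilon>\<^sub>1 = Min ({\<bar>\<mu> i - \<mu> j\<bar> | i j. i < j \<and> j < k} \<union> {\<bar>\<mu>h i - \<mu>h j\<bar> | i j. i < j \<and> j < k})"
    and "\<epsilon>\<^sub>2 = Min ({w i | i. i < k} \<union> {wh i | i. i < k})"
    and "\<epsilon> < \<epsilon>\<^sub>1 * \<epsilon>\<^sub>2 / 4"
  shows "\<exists>\<sigma>. \<sigma> permutes {..<k} \<and>
           (\<forall>i<k. \<bar>\<mu> i - \<mu>h (\<sigma> i)\<bar> < \<epsilon> / \<epsilon>\<^sub>2) \<and>
           (\<forall>i<k. \<bar>w i - wh (\<sigma> i)\<bar> < 2 * \<epsilon> / \<epsilon>\<^sub>1)"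
proof -
  let ?D = "{\<bar>\<mu> i - \<mu> j\<bar> | i j. i < j \<and> j < k} \<union> {\<bar>\<mu>h i - \<mu>h j\<bar> | i j. i < j \<and> j < k}"
  let ?W = "{w i | i. i < k} \<union> {wh i | i. i < k}"
  have fin: "finite ?D" "finite ?W"
    by (simp_all add: finite_pair_dists)
  have "\<bar>\<mu> 0 - \<mu> 1\<bar> \<in> ?D" "w 0 \<in> ?W"
    using assms(1) pair_dist_in_pair_dists[of 0 k 1 \<mu>] by auto
  then have "\<epsilon>\<^sub>1 \<in> ?D" "\<epsilon>\<^sub>2 \<in> ?W"
    unfolding assms(7,8) using fin Min_in by blast+
  then have "\<epsilon>\<^sub>1 \<ge> 0" "\<epsilon>\<^sub>2 \<ge> 0"
    using assms(2,4) by auto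
  moreover have "\<epsilon> > 0"
    using assms(6) by (rule less_ennreal_imp_pos)
  ultimately have "0 < \<epsilon>\<^sub>1 * \<epsilon>\<^sub>2"
    using assms(9) by linarith
  with \<open>\<epsilon>\<^sub>1 \<ge> 0\<close> have "\<epsilon>\<^sub>2 > 0"
    by (simp add: zero_less_mult_iff)
  show ?thesis
  proof (rule mix_dirac_matching[OF assms(6) _ _ _ _ \<open>\<epsilon>\<^sub>2 > 0\<close> assms(9)])
    show "\<epsilon>\<^sub>1 \<le> \<bar>\<mu> i - \<mu> j\<bar>" "\<epsilon>\<^sub>1 \<le> \<bar>\<mu>h i - \<mu>h j\<bar>" if "i < k" "j < k" "i \<noteq> j" for i j
      unfolding assms(7) using fin(1) pair_dist_in_pair_dists[OF that] by (auto intro: Min_le)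
    show "\<epsilon>\<^sub>2 \<le> w i" "\<epsilon>\<^sub>2 \<le> wh i" if "i < k" for i
      unfolding assms(8) using fin(2) that by (auto intro: Min_le)
  qed
qed

end
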